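(* Let $V$ be a vertex operator algebra and $m$ a positive integer. Then $$A_{m,0}(V)*_{m,0}^mA_{0,m}(V)\cong O_{m-1}(V)/O_m(V),$$ where the left side denotes the linear span in $A_m(V)$ of all $a*_{m,0}^mb$ with $a\in A_{m,0}(V)$, $b\in A_{0,m}(V)$.
   Context: Let $V=\bigoplus_nV_n$ be a vertex operator algebra. For homogeneous $u,v\in V$ and $m,n,p\in\mathbb Z_{\ge0}$ put $u*_{m,p}^nv=\sum_{i=0}^p(-1)^i\binom{m+n-p+i}{i}\mathrm{Res}_z\frac{(1+z)^{\mathrm{wt}\,u+m}}{z^{m+n-p+i+1}}Y(u,z)v$, $u*_m^nv=u*_{m,m}^nv$, $u\circ_m^nv=\mathrm{Res}_z\frac{(1+z)^{\mathrm{wt}\,u+m}}{z^{n+m+2}}Y(u,z)v$. $O'_{n,m}(V)$ = span of all $u\circ_m^nv$ and $L(-1)u+(L(0)+m-n)u$; $O_n(V)=O'_{n,n}(V)$ (so $O_n(V)$ is spanned by $\mathrm{Res}_zY(u,z)v\frac{(1+z)^{\mathrm{wt}\,u+n}}{z^{2n+2}}$ and $L(-1)u+L(0)u$, and $O_m(V)\subseteq O_{m-1}(V)$); $O''_{n,m}(V)$ = span of $u*_{m,p_3}^n((a*_{p_1,p_2}^{p_3}b)*_{m,p_1}^{p_3}c-a*_{m,p_2}^{p_3}(b*_{m,p_1}^{p_2}c))$; $O'''_{n,m}(V)=\sum_p(V*_p^nO_p(V))*_{m,p}^nV$; $A_{n,m}(V)=V/(O'_{n,m}+O''_{n,m}+O'''_{n,m})$.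 $A_m(V)=A_{m,m}(V)=V/O_m(V)$ is an associative algebra and $*_{m,0}^m$ induces a bilinear map $A_{m,0}(V)\times A_{0,m}(V)\to A_m(V)$. *)

theory Defs
  imports Complex_Main
begin

definition fsum :: "(nat \<Rightarrow> 'a::comm_monoid_add) \<Rightarrow> 'a" where
  "fsum f = sum f {i. f i \<noteq> 0}"

definition cspan :: "(complex \<Rightarrow> 'v::ab_group_add \<Rightarrow> 'v) \<Rightarrow> 'v set \<Rightarrow> 'v set" where
  "cspan sc A = {y. \<exists>S c. finite S \<and> S \<subseteq> A \<and> y = (\<Sum>x\<in>S. sc (c x) x)}"

text \<open>Vertex operator algebra over the complex numbers.  Y u n v is the mode u_n v,
  i.e. Y(u,z)v = sum_n u_n v z^(-n-1); Vn n is the weight-n space; L(n) = Y om (n+1).\<close>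
definition is_voa ::
  "(complex \<Rightarrow> 'v::ab_group_add \<Rightarrow> 'v) \<Rightarrow> ('v \<Rightarrow> int \<Rightarrow> 'v \<Rightarrow> 'v) \<Rightarrow> 'v \<Rightarrow> 'v \<Rightarrow> complex \<Rightarrow> (int \<Rightarrow> 'v set) \<Rightarrow> bool" where
  "is_voa sc Y vac om cc Vn \<longleftrightarrow>
     vector_space sc \<and>
     \<comment> \<open>grading: subspaces, finite dimensional, bounded below, direct sum\<close>
     (\<forall>n. 0 \<in> Vn n \<and> (\<forall>x\<in>Vn n. \<forall>y\<in>Vn n. x + y \<in> Vn n) \<and> (\<forall>a. \<forall>x\<in>Vn n. sc a x \<in> Vn n)) \<and>
     (\<forall>n. \<exists>B. finite B \<and> B \<subseteq> Vn n \<and> Vn n \<subseteq> cspan sc B) \<and>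
     (\<exists>N. \<forall>n<N. Vn n = {0}) \<and>
     (\<forall>v. \<exists>f. finite {n. f n \<noteq> 0} \<and> (\<forall>n. f n \<in> Vn n) \<and> v = sum f {n. f n \<noteq> 0}) \<and>
     (\<forall>f. finite {n. f n \<noteq> 0} \<and> (\<forall>n. f n \<in> Vn n) \<and> sum f {n. f n \<noteq> 0} = 0 \<longrightarrow> (\<forall>n. f n = 0)) \<and>
     \<comment> \<open>bilinearity of the modes\<close>
     (\<forall>u u' v n. Y (u + u') n v = Y u n v + Y u' n v) \<and>
     (\<forall>a u v n. Y (sc a u) n v = sc a (Y u n v)) \<and>
     (\<forall>u v v' n. Y u n (v + v') = Y u n v + Y u n v') \<and>
     (\<forall>a u v n. Y u n (sc a v) = sc a (Y u n v)) \<and>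
     \<comment> \<open>truncation\<close>
     (\<forall>u v. \<exists>T. \<forall>n\<ge>T. Y u n v = 0) \<and>
     \<comment> \<open>vacuum and creation\<close>
     (\<forall>v n. Y vac n v = (if n = -1 then v else 0)) \<and>
     (\<forall>u. Y u (-1) vac = u \<and> (\<forall>n\<ge>0. Y u n vac = 0)) \<and>
     vac \<in> Vn 0 \<and> om \<in> Vn 2 \<and>
     \<comment> \<open>Jacobi identity (Borcherds identity in components)\<close>
     (\<forall>u v w p q r.
        fsum (\<lambda>i. sc ((of_int p gchoose i)) (Y (Y u (r + int i) v) (p + q - int i) w)) =
        fsum (\<lambda>i. sc ((-1) ^ i * (of_int r gchoose i))
                 (Y u (p + r - int i) (Y v (q + int i) w)
                  - sc (if even r then 1 else -1) (Y v (q + r - int i) (Y u (p + int i) w))))) \<and>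
     \<comment> \<open>Virasoro relations with central charge cc, L(n) = Y om (n+1)\<close>
     (\<forall>m n v. Y om (m + 1) (Y om (n + 1) v) - Y om (n + 1) (Y om (m + 1) v) =
          sc (of_int (m - n)) (Y om (m + n + 1) v)
          + sc (if m + n = 0 then of_int (m ^ 3 - m) / 12 * cc else 0) v) \<and>
     (\<forall>n. \<forall>v\<in>Vn n. Y om 1 v = sc (of_int n) v) \<and>
     (\<forall>u n v. Y (Y om 0 u) n v = sc (of_int (- n)) (Y u (n - 1) v))"

text \<open>Res_z (1+z)^N / z^(k+1) Y(u,z)v.\<close>
definition resop :: "(complex \<Rightarrow> 'v::ab_group_add \<Rightarrow> 'v) \<Rightarrow> ('v\<Rightarrow> int \<Rightarrow> 'v \<Rightarrow> 'v) \<Rightarrow> int \<Rightarrow> int \<Rightarrow> 'v \<Rightarrow> 'v \<Rightarrow> 'v" where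
  "resop sc Y N k u v = fsum (\<lambda>j. sc ((of_int N gchoose j)) (Y u (int j - k - 1) v))"

text \<open>u *_{m,p}^n v for homogeneous u of weight w.\<close>
definition star_op :: "(complex \<Rightarrow> 'v::ab_group_add \<Rightarrow> 'v) \<Rightarrow> ('v\<Rightarrow> int \<Rightarrow> 'v \<Rightarrow> 'v) \<Rightarrow> int \<Rightarrow> nat \<Rightarrow> nat \<Rightarrow> nat \<Rightarrow> 'v \<Rightarrow> 'v \<Rightarrow> 'v" where
  "star_op sc Y w m p n u v =
     (\<Sum>i\<le>p. sc ((-1) ^ i * (of_int (int m + int n - int p + int i) gchoose i))
              (resop sc Y (w + int m) (int m + int n - int p + int i) u v))"

text \<open>u o_m^n v for homogeneous u of weight w.\<close>
definition circ_op :: "(complex \<Rightarrow> 'v::ab_group_add \<Rightarrow> 'v) \<Rightarrow> ('v\<Rightarrow> int \<Rightarrow> 'v \<Rightarrow> 'v) \<Rightarrow> int \<Rightarrow> nat \<Rightarrow> nat \<Rightarrow> 'v \<Rightarrow> 'v \<Rightarrow> 'v" where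
  "circ_op sc Y w m n u v = resop sc Y (w + int m) (int n + int m + 1) u v"

definition O_space :: "(complex \<Rightarrow> 'v::ab_group_add \<Rightarrow> 'v) \<Rightarrow> ('v\<Rightarrow> int \<Rightarrow> 'v \<Rightarrow> 'v) \<Rightarrow> 'v \<Rightarrow> (int \<Rightarrow> 'v set) \<Rightarrow> nat \<Rightarrow> 'v set" where
  "O_space sc Y om Vn n = cspan sc ({circ_op sc Y w n n u v | w u v. u \<in> Vn w} \<union> {Y om 0 u + Y om 1 u | u. True})"

end

theory Submission
  imports Defs "HOL-Computational_Algebra.Formal_Power_Series"
begin

text \<open>
  Write n = m - 1 and R(N, k) u v = Res_z (1 + z)^N z^(-k-1) Y(u, z) v, so that for u of
  weight w we have u o_n^n v = R(w + n, 2n + 1) u v and u *_m^m v = R(w + m, 2m) u v.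
  Since L(-1) raises weights by one and Y(L(-1)u, z) = d/dz Y(u, z), an induction on k shows
  that R(w + n, k) u v lies in O_n(V) for every k \<ge> 2n + 1.  Together with Pascal's rule
  R(N + 1, k + 1) = R(N, k + 1) + R(N, k) this gives O_m(V) \<subseteq> O_n(V) and u *_m^m v \<in> O_n(V).

  Conversely, skew symmetry Y(v, z) u = e^(z L(-1)) Y(u, -z) v holds modulo the span of the
  L(-1)x + L(0)x, on which L(-1) acts on L(0)-eigenvectors as -L(0).  For homogeneous u, v
  it yields v *_m^m u = R(w + n, 2m) u v modulo that span, hence by Pascal's rule
  u o_n^n v = u *_m^m v - v *_m^m u modulo O_m(V), so every generator of O_n(V) lies in the
  left-hand side.
\<close>

lemma fsum_eq_sum_lessThan:
  assumes "\<And>i. K \<le> i \<Longrightarrow> f i = 0"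
  shows "fsum f = sum f {..<K}"
  unfolding fsum_def using assms
  by (intro sum.mono_neutral_left) (auto simp: not_less[symmetric])

lemma gbinomial_one_left: "((1::'a::field_char_0) gchoose i) = (if i \<le> 1 then 1 else 0)"
proof -
  have "((1::'a) gchoose i) = of_nat (1 choose i)"
    by (metis binomial_gbinomial of_nat_1)
  then show ?thesis by (cases i) auto
qed

lemma gbinomial_minus_one_left: "((-1::'a::field_char_0) gchoose i) = (-1) ^ i"
  using gbinomial_minus[of "1::'a" i] by (simp add: binomial_gbinomial[symmetric])

lemma (in vector_space) sum_square_by_antidiagonals:
  fixes W :: "nat \<Rightarrow> 'b"
  assumes W: "\<And>K. C0 \<le> K \<Longrightarrow> W K = 0" and "C0 \<le> C"
  shows "(\<Sum>j<C. \<Sum>i<C. scale (h i j) (W (i + j))) = (\<Sum>K<C0. scale (\<Sum>i\<le>K. h i (K - i)) (W K))"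
proof -
  have "(\<Sum>j<C. \<Sum>i<C. scale (h i j) (W (i + j)))
      = (\<Sum>(i, j)\<in>{..<C} \<times> {..<C}. scale (h i j) (W (i + j)))"
    by (subst sum.swap) (simp only: sum.cartesian_product)
  also have "\<dots> = (\<Sum>(i, j)\<in>{(i, j). i + j < C0}. scale (h i j) (W (i + j)))"
    using assms by (intro sum.mono_neutral_right) (auto, meson not_less)
  also have "\<dots> = (\<Sum>K<C0. \<Sum>i\<le>K. scale (h i (K - i)) (W (i + (K - i))))"
    by (rule sum.triangle_reindex)
  also have "\<dots> = (\<Sum>K<C0. scale (\<Sum>i\<le>K. h i (K - i)) (W K))"
    by (simp add: scale_sum_left)
  finally show ?thesis .
qed

text \<open>
  The coefficient of Y(u, z) v in Res_z (1 + z)^(a + b - N + k - 1) z^(-k-1) Y(v, z) u after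
  skew symmetry for weights a, b; Vandermonde's identity reduces it to the one of
  (-1)^k Res_z (1 + z)^N z^(-k-1) Y(u, z) v.
\<close>
lemma Vandermonde_skew_coefficients:
  fixes a b N :: int and k K :: nat
  shows "(\<Sum>i\<le>K. (of_int (a + b - N + int k - 1) gchoose (K - i)) *
      (- (if even (int (K - i) - int k - 1) then 1 else -1) * (-1) ^ i *
       ((- (of_int a + of_int b - of_int (int (K - i) - int k - 1 + int i) - 1)) gchoose i)))
    = (-1) ^ k * (of_int N gchoose K :: 'a::field_char_0)"
proof -
  define M :: 'a where "M = of_int (a + b - N + int k - 1)"
  define P :: 'a where "P = of_int (int K - int k - a - b)"
  have summand: "(of_int (a + b - N + int k - 1) gchoose (K - i)) *
      (- (if even (int (K - i) - int k - 1) then 1 else -1) * (-1) ^ i *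
       ((- (of_int a + of_int b - of_int (int (K - i) - int k - 1 + int i) - 1)) gchoose i))
     = (-1) ^ (K + k) * ((P gchoose i) * (M gchoose (K - i)))" if "i \<in> {..K}" for i
  proof -
    from that have "i \<le> K" by simp
    have "even (int (K - i) - int k - 1) \<longleftrightarrow> \<not> even (K - i + k)" by presburger
    then have "- (if even (int (K - i) - int k - 1) then 1 else -1 :: 'a) * (-1) ^ i
        = (-1) ^ (K - i + k + i)"
      by (simp add: minus_one_power_iff power_add)
    also have "K - i + k + i = K + k" using \<open>i \<le> K\<close> by simp
    finally have sign: "- (if even (int (K - i) - int k - 1) then 1 else -1 :: 'a) * (-1) ^ i
        = (-1) ^ (K + k)" .
    have "(- (of_int a + of_int b - of_int (int (K - i) - int k - 1 + int i) - 1) :: 'a) = P"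
      unfolding P_def using \<open>i \<le> K\<close> by (simp add: of_nat_diff)
    then show ?thesis unfolding sign M_def[symmetric] by (simp add: mult_ac)
  qed
  have "(\<Sum>i\<le>K. (of_int (a + b - N + int k - 1) gchoose (K - i)) *
      (- (if even (int (K - i) - int k - 1) then 1 else -1) * (-1) ^ i *
       ((- (of_int a + of_int b - of_int (int (K - i) - int k - 1 + int i) - 1)) gchoose i)))
     = (\<Sum>i\<le>K. (-1) ^ (K + k) * ((P gchoose i) * (M gchoose (K - i))))"
    by (rule sum.cong[OF refl summand])
  also have "\<dots> = (-1) ^ (K + k) * (\<Sum>i\<le>K. (P gchoose i) * (M gchoose (K - i)))"
    by (simp add: sum_distrib_left)
  also have "(\<Sum>i\<le>K. (P gchoose i) * (M gchoose (K - i))) = (P + M) gchoose K"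
    using gbinomial_Vandermonde[of P M K] by (simp add: atLeast0AtMost)
  also have "P + M = of_nat K - of_int N - 1"
    unfolding P_def M_def by simp
  also have "(-1) ^ (K + k) * ((of_nat K - of_int N - 1) gchoose K) = (-1) ^ k * (of_int N gchoose K :: 'a)"
    using gbinomial_negated_upper[of "of_int N :: 'a" K] by (simp add: power_add)
  finally show ?thesis .
qed

locale voa =
  fixes sc :: "complex \<Rightarrow> 'v::ab_group_add \<Rightarrow> 'v"
    and Y :: "'v \<Rightarrow> int \<Rightarrow> 'v \<Rightarrow> 'v" and vac om :: 'v and cc :: complex
    and Vn :: "int \<Rightarrow> 'v set"
  assumes is_voa: "is_voa sc Y vac om cc Vn"
begin

sublocale vs: vector_space sc
  using is_voa unfolding is_voa_def by (rule conjunct1)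

abbreviation L0 :: "'v \<Rightarrow> 'v" where "L0 \<equiv> Y om 1"
abbreviation Lm1 :: "'v \<Rightarrow> 'v" where "Lm1 \<equiv> Y om 0"

lemma Vn_zero: "0 \<in> Vn n"
  using is_voa by (simp add: is_voa_def)

lemma Vn_scale: "x \<in> Vn n \<Longrightarrow> sc a x \<in> Vn n"
  using is_voa by (simp add: is_voa_def)

lemma homogeneous_decomposition:
  "\<exists>f. finite {n. f n \<noteq> 0} \<and> (\<forall>n. f n \<in> Vn n) \<and> v = sum f {n. f n \<noteq> 0}"
  using is_voa unfolding is_voa_def by (elim conjE) blast

lemma homogeneous_decomposition_unique:
  "finite {n. f n \<noteq> 0} \<Longrightarrow> \<forall>n. f n \<in> Vn n \<Longrightarrow> sum f {n. f n \<noteq> 0} = 0 \<Longrightarrow> f n = 0"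
  using is_voa unfolding is_voa_def by (elim conjE) blast

lemma Y_add_right: "Y u n (v + v') = Y u n v + Y u n v'"
  using is_voa by (simp add: is_voa_def)

lemma Y_scale_left: "Y (sc a u) n v = sc a (Y u n v)"
  using is_voa by (simp add: is_voa_def)

lemma Y_scale_right: "Y u n (sc a v) = sc a (Y u n v)"
  using is_voa by (simp add: is_voa_def)

lemma Y_truncation: "\<exists>T. \<forall>n\<ge>T. Y u n v = 0"
  using is_voa by (simp add: is_voa_def)

lemma Y_vacuum_minus_one: "Y u (-1) vac = u"
  using is_voa by (simp add: is_voa_def)

lemma Y_vacuum_nonneg: "n \<ge> 0 \<Longrightarrow> Y u n vac = 0"
  using is_voa by (simp add: is_voa_def)

lemma borcherds:
  "fsum (\<lambda>i. sc ((of_int p gchoose i)) (Y (Y u (r + int i) v) (p + q - int i) w)) =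
   fsum (\<lambda>i. sc ((-1) ^ i * (of_int r gchoose i))
            (Y u (p + r - int i) (Y v (q + int i) w)
             - sc (if even r then 1 else -1) (Y v (q + r - int i) (Y u (p + int i) w))))"
  using is_voa by (simp add: is_voa_def)

lemma virasoro:
  "Y om (m + 1) (Y om (n + 1) v) - Y om (n + 1) (Y om (m + 1) v) =
     sc (of_int (m - n)) (Y om (m + n + 1) v)
     + sc (if m + n = 0 then of_int (m ^ 3 - m) / 12 * cc else 0) v"
  using is_voa by (simp add: is_voa_def)

lemma L0_homogeneous: "v \<in> Vn n \<Longrightarrow> L0 v = sc (of_int n) v"
  using is_voa by (simp add: is_voa_def)

lemma Lm1_derivative: "Y (Lm1 u) n v = sc (of_int (- n)) (Y u (n - 1) v)"
  using is_voa by (simp add: is_voa_def)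

lemma Y_zero_left [simp]: "Y 0 n v = 0"
  using Y_scale_left[of 0 0 n v] by simp

lemma Y_zero_right [simp]: "Y u n 0 = 0"
  using Y_add_right[of u n 0 0] by simp

lemma Y_sum_right: "Y u n (sum f A) = (\<Sum>x\<in>A. Y u n (f x))"
  by (induction A rule: infinite_finite_induct) (auto simp: Y_add_right)

lemma cspan_eq_span: "cspan sc A = vs.span A"
  unfolding cspan_def vs.span_explicit by auto

lemma resop_eq_sum:
  assumes "\<forall>n\<ge>T. Y u n v = 0" and "nat (T + k + 1) \<le> C"
  shows "resop sc Y N k u v = (\<Sum>j<C. sc (of_int N gchoose j) (Y u (int j - k - 1) v))"
  unfolding resop_def
proof (rule fsum_eq_sum_lessThan)
  fix i assume "C \<le> i"
  then have "int i - k - 1 \<ge> T" using assms(2) by linarith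
  then show "sc (of_int N gchoose i) (Y u (int i - k - 1) v) = 0" using assms(1) by simp
qed

lemma resop_add_right: "resop sc Y N k u (v + v') = resop sc Y N k u v + resop sc Y N k u v'"
proof -
  obtain T1 where T1: "\<forall>n\<ge>T1. Y u n v = 0" using Y_truncation by blast
  obtain T2 where T2: "\<forall>n\<ge>T2. Y u n v' = 0" using Y_truncation by blast
  define T where "T = max T1 T2"
  have "\<forall>n\<ge>T. Y u n v = 0" "\<forall>n\<ge>T. Y u n v' = 0" "\<forall>n\<ge>T. Y u n (v + v') = 0"
    using T1 T2 by (auto simp: T_def Y_add_right)
  then show ?thesis
    by (simp add: resop_eq_sum[OF _ order_refl, of T] Y_add_right vs.scale_right_distrib sum.distrib)
qed

lemma resop_sum_right: "resop sc Y N k u (sum f A) = (\<Sum>x\<in>A. resop sc Y N k u (f x))"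
proof (induction A rule: infinite_finite_induct)
  case (infinite A)
  then show ?case using resop_add_right[of N k u 0 0] by simp
next
  case empty
  then show ?case using resop_add_right[of N k u 0 0] by simp
next
  case (insert x F)
  then show ?case by (simp add: resop_add_right)
qed

lemma resop_pascal:
  "resop sc Y (N + 1) (k + 1) u v = resop sc Y N (k + 1) u v + resop sc Y N k u v"
proof -
  obtain T where T: "\<forall>n\<ge>T. Y u n v = 0" using Y_truncation by blast
  define C where "C = nat (T + k + 2)"
  have e1: "resop sc Y (N + 1) (k + 1) u v = (\<Sum>j<Suc C. sc (of_int (N+1) gchoose j) (Y u (int j - (k+1) - 1) v))"
    by (rule resop_eq_sum[OF T]) (simp add: C_def)
  have e2: "resop sc Y N (k + 1) u v = (\<Sum>j<Suc C. sc (of_int N gchoose j) (Y u (int j - (k+1) - 1) v))"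
    by (rule resop_eq_sum[OF T]) (simp add: C_def)
  have e3: "resop sc Y N k u v = (\<Sum>j<C. sc (of_int N gchoose j) (Y u (int j - k - 1) v))"
    by (rule resop_eq_sum[OF T]) (simp add: C_def)
  have g: "(of_int (N+1) gchoose Suc i :: complex) = (of_int N gchoose i) + (of_int N gchoose Suc i)" for i
    using gbinomial_Suc_Suc[of "of_int N :: complex" i] by simp
  have idx: "int (Suc i) - (k + 1) - 1 = int i - k - 1" for i by simp
  have s: "(\<Sum>i<C. sc (of_int (N+1) gchoose Suc i) (W i)) = (\<Sum>i<C. sc (of_int N gchoose i) (W i)) + (\<Sum>i<C. sc (of_int N gchoose Suc i) (W i))" for W
    unfolding g by (simp add: vs.scale_left_distrib sum.distrib)
  show ?thesis unfolding e1 e2 e3 sum.lessThan_Suc_shift idx s by (simp add: add_ac)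
qed

lemma resop_Lm1_left:
  "resop sc Y (N + 1) k (Lm1 x) v =
     sc (of_int (k - N)) (resop sc Y N k x v) + sc (of_int (k + 1)) (resop sc Y N (k + 1) x v)"
proof -
  obtain T where T: "\<forall>n\<ge>T. Y x n v = 0" using Y_truncation by blast
  have T': "\<forall>n\<ge>T+1. Y (Lm1 x) n v = 0" using T by (simp add: Lm1_derivative)
  define C where "C = nat (T + k + 2)"
  have e1: "resop sc Y (N + 1) k (Lm1 x) v = (\<Sum>j<Suc C. sc (of_int (N+1) gchoose j) (Y (Lm1 x) (int j - k - 1) v))"
    by (rule resop_eq_sum[OF T']) (simp add: C_def)
  have e2: "resop sc Y N (k + 1) x v = (\<Sum>j<Suc C. sc (of_int N gchoose j) (Y x (int j - (k+1) - 1) v))"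
    by (rule resop_eq_sum[OF T]) (simp add: C_def)
  have e3: "resop sc Y N k x v = (\<Sum>j<C. sc (of_int N gchoose j) (Y x (int j - k - 1) v))"
    by (rule resop_eq_sum[OF T]) (simp add: C_def)
  have coef: "(of_int (N+1) gchoose Suc i) * of_int (- (int (Suc i) - k - 1)) =
     of_int (k - N) * (of_int N gchoose i) + of_int (k + 1) * (of_int N gchoose Suc i :: complex)" for i
  proof -
    have g: "(of_int (N+1) gchoose Suc i :: complex) = (of_int N gchoose i) + (of_int N gchoose Suc i)"
      using gbinomial_Suc_Suc[of "of_int N :: complex" i] by simp
    have m: "(of_int N :: complex) * (of_int N gchoose i) = of_nat i * (of_int N gchoose i) + of_nat (Suc i) * (of_int N gchoose Suc i)"
      by (rule gbinomial_mult_1)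
    show ?thesis unfolding g using m by (simp add: algebra_simps)
  qed
  have idx: "int (Suc i) - (k + 1) - 1 = int i - k - 1" for i by simp
  have idx2: "int (Suc i) - k - 1 - 1 = int i - k - 1" for i by simp
  have "resop sc Y (N + 1) k (Lm1 x) v =
     sc (of_int (k+1)) (Y x (- k - 2) v) +
     (\<Sum>i<C. sc ((of_int (N+1) gchoose Suc i) * of_int (- (int (Suc i) - k - 1))) (Y x (int i - k - 1) v))"
    unfolding e1 sum.lessThan_Suc_shift by (simp add: Lm1_derivative idx2 algebra_simps)
  also have "\<dots> = sc (of_int (k+1)) (Y x (- k - 2) v) +
     (\<Sum>i<C. sc (of_int (k - N) * (of_int N gchoose i)) (Y x (int i - k - 1) v) + sc (of_int (k + 1) * (of_int N gchoose Suc i)) (Y x (int i - k - 1) v))"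
    unfolding coef by (simp add: vs.scale_left_distrib)
  also have "\<dots> = sc (of_int (k - N)) (resop sc Y N k x v) + sc (of_int (k + 1)) (resop sc Y N (k + 1) x v)"
    unfolding e2 e3 sum.lessThan_Suc_shift idx vs.scale_sum_right vs.scale_scale vs.scale_right_distrib sum.distrib
    by (simp add: add_ac mult_ac)
  finally show ?thesis .
qed


lemma L0_Lm1: "L0 (Lm1 v) = Lm1 (L0 v) + Lm1 v"
  using virasoro[of 0 "-1" v] by (simp add: algebra_simps)

lemma L0_Lm1_eigen: "L0 x = sc d x \<Longrightarrow> L0 (Lm1 x) = sc (d + 1) (Lm1 x)"
  by (simp add: L0_Lm1 Y_scale_right vs.scale_left_distrib)

lemma L0_eigen_homogeneous:
  assumes L0y: "L0 y = sc (of_int a) y"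
  shows "y \<in> Vn a"
proof -
  obtain f where f: "finite {n. f n \<noteq> 0}" "\<forall>n. f n \<in> Vn n" "y = sum f {n. f n \<noteq> 0}"
    using homogeneous_decomposition by blast
  define S where "S = {n. f n \<noteq> 0}"
  define g where "g n = sc (of_int n - of_int a) (f n)" for n
  have "L0 y = (\<Sum>n\<in>S. sc (of_int n) (f n))"
    unfolding f(3) S_def[symmetric] Y_sum_right using f(2) by (auto intro!: sum.cong L0_homogeneous)
  moreover have "sc (of_int a) y = (\<Sum>n\<in>S. sc (of_int a) (f n))"
    unfolding f(3) S_def[symmetric] vs.scale_sum_right ..
  ultimately have "(\<Sum>n\<in>S. g n) = 0"
    unfolding g_def vs.scale_left_diff_distrib sum_subtractf using L0y by simp
  moreover have "sum g {n. g n \<noteq> 0} = sum g S"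
    by (rule sum.mono_neutral_left) (auto simp: S_def g_def f(1))
  moreover have "finite {n. g n \<noteq> 0}"
    by (rule finite_subset[OF _ f(1)]) (auto simp: g_def)
  moreover have "\<forall>n. g n \<in> Vn n" using f(2) Vn_scale g_def by simp
  ultimately have g0: "g n = 0" for n using homogeneous_decomposition_unique by metis
  have "f n = 0" if "n \<noteq> a" for n using g0[of n] that by (simp add: g_def)
  then have "y = (\<Sum>n\<in>S. if n = a then f n else 0)"
    unfolding f(3) S_def[symmetric] by (intro sum.cong) auto
  also have "\<dots> = (if a \<in> S then f a else 0)"
    using f(1) by (simp add: S_def)
  finally show ?thesis using f(2) Vn_zero by simp
qed

lemma Lm1_homogeneous: "u \<in> Vn a \<Longrightarrow> Lm1 u \<in> Vn (a + 1)"
  by (rule L0_eigen_homogeneous) (simp add: L0_Lm1_eigen L0_homogeneous)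

lemma L0_mode_eigen:
  assumes u: "L0 u = sc a u" and v: "L0 v = sc b v"
  shows "L0 (Y u n v) = sc (a + b - of_int n - 1) (Y u n v)"
proof -
  have "fsum (\<lambda>i. sc (of_int 1 gchoose i) (Y (Y om (0 + int i) u) (1 + n - int i) v))
      = (\<Sum>i<2. sc (of_int 1 gchoose i) (Y (Y om (0 + int i) u) (1 + n - int i) v))"
    by (rule fsum_eq_sum_lessThan) (simp add: gbinomial_one_left)
  also have "\<dots> = sc (- of_int (1 + n)) (Y u n v) + sc a (Y u n v)"
    by (simp add: numeral_2_eq_2 Lm1_derivative u Y_scale_left)
  finally have lhs: "fsum (\<lambda>i. sc (of_int 1 gchoose i) (Y (Y om (0 + int i) u) (1 + n - int i) v))
      = sc (- of_int (1 + n)) (Y u n v) + sc a (Y u n v)" .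
  have "fsum (\<lambda>i. sc ((-1) ^ i * (of_int 0 gchoose i))
          (Y om (1 + 0 - int i) (Y u (n + int i) v)
           - sc (if even (0::int) then 1 else -1) (Y u (n + 0 - int i) (Y om (1 + int i) v))))
      = (\<Sum>i<1. sc ((-1) ^ i * (of_int 0 gchoose i))
          (Y om (1 + 0 - int i) (Y u (n + int i) v)
           - sc (if even (0::int) then 1 else -1) (Y u (n + 0 - int i) (Y om (1 + int i) v))))"
    by (rule fsum_eq_sum_lessThan) (simp add: gbinomial_0_left)
  also have "\<dots> = L0 (Y u n v) - sc b (Y u n v)"
    by (simp add: v Y_scale_right)
  finally have rhs: "fsum (\<lambda>i. sc ((-1) ^ i * (of_int 0 gchoose i))
          (Y om (1 + 0 - int i) (Y u (n + int i) v)
           - sc (if even (0::int) then 1 else -1) (Y u (n + 0 - int i) (Y om (1 + int i) v))))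
      = L0 (Y u n v) - sc b (Y u n v)" .
  have "L0 (Y u n v) = sc (- of_int (1 + n)) (Y u n v) + sc a (Y u n v) + sc b (Y u n v)"
    using borcherds[of 1 om 0 u n v, unfolded lhs rhs] by (simp add: eq_diff_eq)
  also have "\<dots> = sc (- of_int (1 + n) + a + b) (Y u n v)"
    by (simp only: vs.scale_left_distrib)
  also have "- of_int (1 + n) + a + b = a + b - of_int n - 1"
    by simp
  finally show ?thesis .
qed

definition Lrel :: "'v set" where
  "Lrel = {Lm1 u + L0 u | u. True}"

definition O_gens :: "nat \<Rightarrow> 'v set" where
  "O_gens n = {circ_op sc Y w n n u v | w u v. u \<in> Vn w} \<union> Lrel"

lemma O_space_eq_span: "O_space sc Y om Vn n = vs.span (O_gens n)"
  unfolding O_space_def cspan_eq_span O_gens_def Lrel_def ..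

lemma subspace_O_space: "vs.subspace (O_space sc Y om Vn n)"
  unfolding O_space_eq_span by simp

lemma span_Lrel_subset_O_space: "vs.span Lrel \<subseteq> O_space sc Y om Vn n"
  unfolding O_space_eq_span O_gens_def by (rule vs.span_mono) auto

lemma circ_op_eq_resop: "circ_op sc Y w n n u v = resop sc Y (w + int n) (int n + int n + 1) u v"
  unfolding circ_op_def ..

lemma star_op_eq_resop: "star_op sc Y w m 0 m u v = resop sc Y (w + int m) (int m + int m) u v"
  unfolding star_op_def by simp

lemma resop_in_O_space:
  "u \<in> Vn a \<Longrightarrow> resop sc Y (a + int n) (int n + int n + 1 + int p) u v \<in> O_space sc Y om Vn n"
proof (induction p arbitrary: a u)
  case 0
  then show ?case
    unfolding O_space_eq_span by (intro vs.span_base) (auto simp: O_gens_def circ_op_eq_resop)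
next
  case (Suc p)
  define N where "N = a + int n"
  define k where "k = int n + int n + 1 + int p"
  note O = subspace_O_space[of n]
  have "resop sc Y (N + 1) k (Lm1 u) v \<in> O_space sc Y om Vn n"
    using Suc.IH[OF Lm1_homogeneous[OF Suc.prems]] by (simp add: N_def k_def add_ac)
  moreover have "resop sc Y N k u v \<in> O_space sc Y om Vn n"
    using Suc.IH[OF Suc.prems] by (simp add: N_def k_def)
  moreover have "sc (of_int (k + 1)) (resop sc Y N (k + 1) u v)
      = resop sc Y (N + 1) k (Lm1 u) v - sc (of_int (k - N)) (resop sc Y N k u v)"
    by (simp add: resop_Lm1_left)
  ultimately have "sc (of_int (k + 1)) (resop sc Y N (k + 1) u v) \<in> O_space sc Y om Vn n"
    using O by (simp add: vs.subspace_diff vs.subspace_scale)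
  then have "sc (inverse (of_int (k + 1))) (sc (of_int (k + 1)) (resop sc Y N (k + 1) u v))
      \<in> O_space sc Y om Vn n"
    using O by (rule vs.subspace_scale[rotated])
  moreover have "k + 1 \<noteq> 0"
    unfolding k_def by linarith
  then have "(of_int (k + 1) :: complex) \<noteq> 0"
    by (metis of_int_eq_0_iff)
  ultimately have "resop sc Y N (k + 1) u v \<in> O_space sc Y om Vn n" by simp
  then show ?case by (simp add: N_def k_def add_ac)
qed

lemma resop_Suc_weight_in_O_space:
  assumes "u \<in> Vn w"
  shows "resop sc Y (w + int n + 1) (int n + int n + 1 + int p + 1) u v \<in> O_space sc Y om Vn n"
proof -
  define N k where "N = w + int n" and "k = int n + int n + 1 + int p"
  have k1: "int n + int n + 1 + int (Suc p) = k + 1" unfolding k_def by simp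
  have "resop sc Y N k u v \<in> O_space sc Y om Vn n"
    unfolding N_def k_def by (rule resop_in_O_space[OF assms])
  moreover have "resop sc Y N (k + 1) u v \<in> O_space sc Y om Vn n"
    using resop_in_O_space[OF assms, of n "Suc p" v] unfolding k1 N_def .
  ultimately have "resop sc Y (N + 1) (k + 1) u v \<in> O_space sc Y om Vn n"
    by (simp add: resop_pascal vs.subspace_add subspace_O_space)
  then show ?thesis unfolding N_def k_def .
qed

lemma O_space_Suc_subset: "O_space sc Y om Vn (Suc n) \<subseteq> O_space sc Y om Vn n"
  unfolding O_space_eq_span[of "Suc n"]
proof (rule vs.span_minimal[OF _ subspace_O_space])
  show "O_gens (Suc n) \<subseteq> O_space sc Y om Vn n"
  proof
    fix x assume "x \<in> O_gens (Suc n)"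
    then consider (circ) w u v where "u \<in> Vn w" "x = circ_op sc Y w (Suc n) (Suc n) u v"
      | (L) "x \<in> Lrel"
      unfolding O_gens_def by blast
    then show "x \<in> O_space sc Y om Vn n"
    proof cases
      case circ
      have "x = resop sc Y (w + int n + 1) (int n + int n + 1 + int 1 + 1) u v"
        unfolding circ(2) circ_op_eq_resop by (simp add: algebra_simps)
      then show ?thesis using resop_Suc_weight_in_O_space[OF circ(1), of n 1 v] by (simp only:)
    next
      case L
      then show ?thesis using span_Lrel_subset_O_space vs.span_base by blast
    qed
  qed
qed

lemma star_op_in_O_space:
  assumes "u \<in> Vn w"
  shows "star_op sc Y w (Suc n) 0 (Suc n) u v \<in> O_space sc Y om Vn n"
proof -
  have "star_op sc Y w (Suc n) 0 (Suc n) u v = resop sc Y (w + int n + 1) (int n + int n + 1 + int 0 + 1) u v"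
    unfolding star_op_eq_resop by (simp add: algebra_simps)
  then show ?thesis using resop_Suc_weight_in_O_space[OF assms, of n 0 v] by (simp only:)
qed

text \<open>
  x_(-1-i) vac = L(-1)^i x / i!, and modulo Lrel each L(-1) acts on an eigenvector of L(0) by
  minus its eigenvalue.
\<close>
lemma vacuum_mode_mod_Lrel:
  "L0 x = sc d x \<Longrightarrow> Y x (-1 - int i) vac - sc ((- d) gchoose i) x \<in> vs.span Lrel"
proof (induction i arbitrary: x d)
  case 0
  then show ?case by (simp add: Y_vacuum_minus_one vs.span_zero)
next
  case (Suc i)
  define Z where "Z = Y x (-1 - int (Suc i)) vac"
  define c where "c = ((- d - 1) gchoose i)"
  define e :: complex where "e = inverse (of_nat (Suc i))"
  have IH: "Y (Lm1 x) (-1 - int i) vac - sc c (Lm1 x) \<in> vs.span Lrel"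
    using Suc.IH[OF L0_Lm1_eigen[OF Suc.prems]]
    unfolding c_def minus_add_distrib diff_conv_add_uminus .
  have Lrel: "Lm1 x + sc d x \<in> vs.span Lrel"
    unfolding Suc.prems[symmetric] by (rule vs.span_base) (auto simp: Lrel_def)
  have D: "Y (Lm1 x) (-1 - int i) vac = sc (of_nat (Suc i)) Z"
    unfolding Z_def Lm1_derivative by (simp add: algebra_simps)
  have e1: "e * of_nat (Suc i) = 1"
    unfolding e_def by (simp del: of_nat_Suc)
  have e2: "e * c * d = - ((- d) gchoose Suc i)"
    using gbinomial_absorption[of i "- d"] unfolding e_def c_def
    by (simp del: of_nat_Suc add: field_simps)
  have "sc e (Y (Lm1 x) (-1 - int i) vac - sc c (Lm1 x)) + sc (e * c) (Lm1 x + sc d x)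
      = sc (e * of_nat (Suc i)) Z + sc (e * c * d) x"
    unfolding D by (simp add: algebra_simps)
  also have "\<dots> = Z - sc ((- d) gchoose Suc i) x"
    unfolding e1 e2 by simp
  finally have "Z - sc ((- d) gchoose Suc i) x
      = sc e (Y (Lm1 x) (-1 - int i) vac - sc c (Lm1 x)) + sc (e * c) (Lm1 x + sc d x)"
    by (rule sym)
  also have "\<dots> \<in> vs.span Lrel"
    using IH Lrel by (rule vs.span_add[OF vs.span_scale vs.span_scale])
  finally show ?case unfolding Z_def .
qed

lemma skew_symmetry_fsum:
  "fsum (\<lambda>i. sc ((-1) ^ i) (Y (Y u (r + int i) v) (-1 - int i) vac))
     = - sc (if even r then 1 else -1) (Y v r u)"
proof -
  have "fsum (\<lambda>i. sc ((-1) ^ i * (of_int r gchoose i))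
          (Y u (-1 + r - int i) (Y v (0 + int i) vac)
           - sc (if even r then 1 else -1) (Y v (0 + r - int i) (Y u (-1 + int i) vac))))
      = (\<Sum>i<1. sc ((-1) ^ i * (of_int r gchoose i))
          (Y u (-1 + r - int i) (Y v (0 + int i) vac)
           - sc (if even r then 1 else -1) (Y v (0 + r - int i) (Y u (-1 + int i) vac))))"
    by (rule fsum_eq_sum_lessThan) (simp add: Y_vacuum_nonneg)
  then show ?thesis
    using borcherds[of "-1" u r v 0 vac]
    by (simp add: gbinomial_minus_one_left Y_vacuum_minus_one Y_vacuum_nonneg)
qed

lemma skew_symmetry:
  assumes "\<forall>n\<ge>T. Y u n v = 0" and "T \<le> r + int C"
  shows "Y v r u = - sc (if even r then 1 else -1)
                      (\<Sum>i<C. sc ((-1) ^ i) (Y (Y u (r + int i) v) (-1 - int i) vac))"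
proof -
  define s :: complex where "s = (if even r then 1 else -1)"
  have "fsum (\<lambda>i. sc ((-1) ^ i) (Y (Y u (r + int i) v) (-1 - int i) vac))
      = (\<Sum>i<C. sc ((-1) ^ i) (Y (Y u (r + int i) v) (-1 - int i) vac))"
    by (rule fsum_eq_sum_lessThan) (use assms in auto)
  then have "(\<Sum>i<C. sc ((-1) ^ i) (Y (Y u (r + int i) v) (-1 - int i) vac)) = - sc s (Y v r u)"
    using skew_symmetry_fsum unfolding s_def by simp
  moreover have "s * s = 1" unfolding s_def by simp
  ultimately show ?thesis unfolding s_def[symmetric] by simp
qed

lemma skew_symmetry_mod_Lrel:
  assumes u: "L0 u = sc (of_int a) u" and v: "L0 v = sc (of_int b) v"
    and T: "\<forall>n\<ge>T. Y u n v = 0" "T \<le> r + int C"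
  shows "Y v r u - (\<Sum>i<C. sc (- (if even r then 1 else -1) * (-1) ^ i *
            ((- (of_int a + of_int b - of_int (r + int i) - 1)) gchoose i)) (Y u (r + int i) v))
         \<in> vs.span Lrel"
proof -
  define s :: complex where "s = (if even r then 1 else -1)"
  define g where "g i = ((- (of_int a + of_int b - of_int (r + int i) - 1)) gchoose i :: complex)" for i
  define X where "X i = Y u (r + int i) v" for i
  have "Y v r u - (\<Sum>i<C. sc (- s * (-1) ^ i * g i) (X i))
      = (\<Sum>i<C. sc (- s * (-1) ^ i) (Y (X i) (-1 - int i) vac - sc (g i) (X i)))"
    unfolding skew_symmetry[OF T] X_def[symmetric] s_def[symmetric]
    by (simp add: vs.scale_sum_right vs.scale_right_diff_distrib sum_subtractf sum_negf mult.assoc)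
  also have "\<dots> \<in> vs.span Lrel"
    unfolding X_def g_def by (intro vs.span_sum vs.span_scale vacuum_mode_mod_Lrel L0_mode_eigen u v)
  finally show ?thesis unfolding s_def g_def X_def .
qed

lemma resop_skew_symmetry:
  assumes u: "L0 u = sc (of_int a) u" and v: "L0 v = sc (of_int b) v"
  shows "resop sc Y (a + b - N + int k - 1) (int k) v u - sc ((-1) ^ k) (resop sc Y N (int k) u v)
         \<in> vs.span Lrel"
proof -
  obtain T where T: "\<forall>n\<ge>T. Y u n v = 0" using Y_truncation by blast
  obtain T' where T': "\<forall>n\<ge>T'. Y v n u = 0" using Y_truncation by blast
  define C where "C = nat (max T T' + int k + 1)"
  define C0 where "C0 = nat (T + int k + 1)"
  define M where "M = a + b - N + int k - 1"
  define W where "W K = Y u (int K - int k - 1) v" for K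
  define c where "c j i = - (if even (int j - int k - 1) then 1 else -1) * (-1) ^ i *
      ((- (of_int a + of_int b - of_int (int j - int k - 1 + int i) - 1)) gchoose i :: complex)"
    for j i
  have W_shift: "Y u (int j - int k - 1 + int i) v = W (i + j)" for i j
    unfolding W_def by (simp add: algebra_simps)
  have D: "Y v (int j - int k - 1) u - (\<Sum>i<C. sc (c j i) (W (i + j))) \<in> vs.span Lrel" for j
  proof -
    have Tj: "T \<le> int j - int k - 1 + int C" unfolding C_def by linarith
    show ?thesis using skew_symmetry_mod_Lrel[OF u v T Tj] by (simp only: c_def W_shift)
  qed
  have eM: "resop sc Y M (int k) v u = (\<Sum>j<C. sc (of_int M gchoose j) (Y v (int j - int k - 1) u))"
    by (rule resop_eq_sum[OF T']) (simp add: C_def)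
  have eN: "resop sc Y N (int k) u v = (\<Sum>K<C0. sc (of_int N gchoose K) (W K))"
    unfolding W_def by (rule resop_eq_sum[OF T]) (simp add: C0_def)
  have "(\<Sum>j<C. sc (of_int M gchoose j) (\<Sum>i<C. sc (c j i) (W (i + j))))
      = (\<Sum>j<C. \<Sum>i<C. sc ((of_int M gchoose j) * c j i) (W (i + j)))"
    by (simp add: vs.scale_sum_right)
  also have "\<dots> = (\<Sum>K<C0. sc (\<Sum>i\<le>K. (of_int M gchoose (K - i)) * c (K - i) i) (W K))"
    by (rule vs.sum_square_by_antidiagonals) (use T in \<open>auto simp: W_def C0_def C_def\<close>)
  also have "\<dots> = (\<Sum>K<C0. sc ((-1) ^ k * (of_int N gchoose K)) (W K))"
    by (simp only: c_def M_def Vandermonde_skew_coefficients)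
  also have "\<dots> = sc ((-1) ^ k) (resop sc Y N (int k) u v)"
    unfolding eN by (simp add: vs.scale_sum_right)
  finally have double_sum: "(\<Sum>j<C. sc (of_int M gchoose j) (\<Sum>i<C. sc (c j i) (W (i + j))))
      = sc ((-1) ^ k) (resop sc Y N (int k) u v)" .
  have "resop sc Y M (int k) v u - sc ((-1) ^ k) (resop sc Y N (int k) u v)
      = (\<Sum>j<C. sc (of_int M gchoose j) (Y v (int j - int k - 1) u - (\<Sum>i<C. sc (c j i) (W (i + j)))))"
    unfolding eM double_sum[symmetric] by (simp add: vs.scale_right_diff_distrib sum_subtractf)
  also have "\<dots> \<in> vs.span Lrel"
    using D by (intro vs.span_sum vs.span_scale)
  finally show ?thesis unfolding M_def .
qed

lemma circ_op_mod_star_op_commutator: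
  assumes p: "p \<in> Vn b" and q: "q \<in> Vn a"
  shows "circ_op sc Y b n n p q
           - (star_op sc Y b (Suc n) 0 (Suc n) p q - star_op sc Y a (Suc n) 0 (Suc n) q p)
         \<in> vs.span Lrel"
proof -
  define R where "R = resop sc Y (b + int n) (int (2 * Suc n)) p q"
  have "resop sc Y (a + b - (a + int (Suc n)) + int (2 * Suc n) - 1) (int (2 * Suc n)) p q
      - sc ((-1) ^ (2 * Suc n)) (resop sc Y (a + int (Suc n)) (int (2 * Suc n)) q p) \<in> vs.span Lrel"
    by (rule resop_skew_symmetry[OF L0_homogeneous[OF q] L0_homogeneous[OF p]])
  moreover have "a + b - (a + int (Suc n)) + int (2 * Suc n) - 1 = b + int n" by simp
  moreover have "star_op sc Y a (Suc n) 0 (Suc n) q p = resop sc Y (a + int (Suc n)) (int (2 * Suc n)) q p"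
    unfolding star_op_eq_resop by simp
  ultimately have skew: "R - star_op sc Y a (Suc n) 0 (Suc n) q p \<in> vs.span Lrel"
    unfolding R_def by (simp add: power_mult)
  have "b + int (Suc n) = (b + int n) + 1" "int (Suc n) + int (Suc n) = (int n + int n + 1) + 1"
    "int (2 * Suc n) = (int n + int n + 1) + 1"
    by simp_all
  then have "star_op sc Y b (Suc n) 0 (Suc n) p q = R + circ_op sc Y b n n p q"
    unfolding R_def by (simp only: circ_op_eq_resop star_op_eq_resop resop_pascal)
  then show ?thesis
    using vs.span_neg[OF skew] by (simp add: algebra_simps)
qed

definition star_ops :: "nat \<Rightarrow> 'v set" where
  "star_ops m = {star_op sc Y w m 0 m u v | w u v. u \<in> Vn w}"

lemma circ_op_in_span_star_ops:
  assumes p: "p \<in> Vn b"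
  shows "circ_op sc Y b n n p q \<in> vs.span (star_ops (Suc n) \<union> O_gens (Suc n))"
proof -
  obtain f where f: "finite {a. f a \<noteq> 0}" "\<forall>a. f a \<in> Vn a" "q = sum f {a. f a \<noteq> 0}"
    using homogeneous_decomposition by blast
  have "circ_op sc Y b n n p q = (\<Sum>a\<in>{a. f a \<noteq> 0}. circ_op sc Y b n n p (f a))"
    unfolding f(3) circ_op_eq_resop resop_sum_right ..
  also have "\<dots> \<in> vs.span (star_ops (Suc n) \<union> O_gens (Suc n))"
  proof (rule vs.span_sum)
    fix a
    have "star_op sc Y b (Suc n) 0 (Suc n) p (f a) - star_op sc Y a (Suc n) 0 (Suc n) (f a) p
        \<in> vs.span (star_ops (Suc n) \<union> O_gens (Suc n))"
      using p f(2) unfolding star_ops_def by (intro vs.span_diff vs.span_base) auto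
    moreover have "circ_op sc Y b n n p (f a)
        - (star_op sc Y b (Suc n) 0 (Suc n) p (f a) - star_op sc Y a (Suc n) 0 (Suc n) (f a) p)
        \<in> vs.span (star_ops (Suc n) \<union> O_gens (Suc n))"
      using circ_op_mod_star_op_commutator[OF p f(2)[rule_format]]
        vs.span_mono[of Lrel "star_ops (Suc n) \<union> O_gens (Suc n)"]
      by (auto simp: O_gens_def)
    ultimately show "circ_op sc Y b n n p (f a) \<in> vs.span (star_ops (Suc n) \<union> O_gens (Suc n))"
      using vs.span_add by fastforce
  qed
  finally show ?thesis .
qed

lemma span_star_ops_plus_O_space_Suc:
  "{x + y | x y. x \<in> cspan sc (star_ops (Suc n)) \<and> y \<in> O_space sc Y om Vn (Suc n)}
     = O_space sc Y om Vn n"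
proof -
  have "{x + y | x y. x \<in> cspan sc (star_ops (Suc n)) \<and> y \<in> O_space sc Y om Vn (Suc n)}
      = vs.span (star_ops (Suc n) \<union> O_gens (Suc n))"
    unfolding vs.span_Un cspan_eq_span O_space_eq_span ..
  also have "\<dots> = vs.span (O_gens n)"
  proof (unfold vs.span_eq, intro conjI)
    show "star_ops (Suc n) \<union> O_gens (Suc n) \<subseteq> vs.span (O_gens n)"
      using star_op_in_O_space O_space_Suc_subset vs.span_superset
      unfolding star_ops_def O_space_eq_span by blast
    have Lrel: "Lrel \<subseteq> vs.span (star_ops (Suc n) \<union> O_gens (Suc n))"
      by (intro subsetI vs.span_base) (simp add: O_gens_def)
    show "O_gens n \<subseteq> vs.span (star_ops (Suc n) \<union> O_gens (Suc n))"
    proof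
      fix z assume "z \<in> O_gens n"
      then consider (circ) b p q where "p \<in> Vn b" "z = circ_op sc Y b n n p q" | (L) "z \<in> Lrel"
        unfolding O_gens_def by blast
      then show "z \<in> vs.span (star_ops (Suc n) \<union> O_gens (Suc n))"
        using Lrel circ_op_in_span_star_ops by cases auto
    qed
  qed
  also have "\<dots> = O_space sc Y om Vn n"
    by (rule O_space_eq_span[symmetric])
  finally show ?thesis .
qed

end

theorem lemma5p1:
  fixes sc :: "complex \<Rightarrow> 'v::ab_group_add \<Rightarrow> 'v"
    and Y :: "'v \<Rightarrow> int \<Rightarrow> 'v \<Rightarrow> 'v" and vac om :: 'v and cc :: complex
    and Vn :: "int \<Rightarrow> 'v set" and m :: nat
  assumes "is_voa sc Y vac om cc Vn" and "m \<ge> 1"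
  shows "{x + y | x y. x \<in> cspan sc {star_op sc Y w m 0 m u v | w u v. u \<in> Vn w}
                      \<and> y \<in> O_space sc Y om Vn m}
         = O_space sc Y om Vn (m - 1)"
proof -
  interpret voa sc Y vac om cc Vn
    by (rule voa.intro) (fact assms(1))
  obtain n where "m = Suc n"
    using \<open>m \<ge> 1\<close> by (cases m) auto
  then show ?thesis
    using span_star_ops_plus_O_space_Suc[of n] by (simp add: star_ops_def)
qed

end
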